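(* Let $\Phi\subset\mathbb{R}^m$ be compact, let $Q\in\mathbb{R}^{n\times n}$ be symmetric positive definite, and let $g:\mathbb{R}^n\to\mathbb{R}^s$, $h:\mathbb{R}^n\to\mathbb{R}^q$ be continuous functions defining convex constraints, so that the feasible set $\mathcal{C}=\{x\in\mathbb{R}^n: g(x)\le 0,\ h(x)=0\}$ is convex. For $v\in\mathbb{R}^n$ let $\Pi^Q_{\mathcal{C}}(v)=\operatorname{argmin}_{w\in\mathcal{C}}\|w-v\|_Q^2$, where $\|x\|_Q=\sqrt{x^\top Qx}$. Let $\{f_\theta:\Phi\to\mathbb{R}^n\}_\theta$ be a family of neural networks that is a universal approximator, i.e. for every continuous $u:\Phi\to\mathbb{R}^n$ and every $\epsilon>0$ there is $\theta$ with $\sup_{\phi\in\Phi}\|u(\phi)-f_\theta(\phi)\|<\epsilon$. Then for every continuous target function $u:\Phi\to\mathcal{C}$ and every $\epsilon>0$ there exist network parameters $\theta$ such that $$\sup_{\phi\in\Phi}\big\|u(\phi)-\Pi^Q_{\mathcal{C}}(f_\theta(\phi))\big\|<\epsilon.$$ That is, the composition $\hat f_\theta=\Pi^Q_{\mathcal{C}}\circ f_\theta:\Phi\to\mathcal{C}$ is a universal approximator for continuous constraint-satisfying mappings.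
   Context: In the paper's framework, $f_\theta(\phi)$ is the predicted mean $\mu_\theta(\phi)$ of a probabilistic model and $\Pi^Q_{\mathcal{C}}(f_\theta(\phi))$ is the projected (constrained) mean. *)

theory Defs
  imports "HOL-Analysis.Analysis"
begin

definition qnorm :: "real^'n^'n \<Rightarrow> real^'n \<Rightarrow> real" where
  "qnorm Q x = sqrt (x \<bullet> (Q *v x))"

definition feasible :: "(real^'n \<Rightarrow> real^'s) \<Rightarrow> (real^'n \<Rightarrow> real^'q) \<Rightarrow> (real^'n) set" where
  "feasible g h = {x. (\<forall>i. g x $ i \<le> 0) \<and> h x = 0}"

definition projQ :: "real^'n^'n \<Rightarrow> (real^'n) set \<Rightarrow> real^'n \<Rightarrow> real^'n" where
  "projQ Q C v = (SOME w. w \<in> C \<and> (\<forall>w'\<in>C. (qnorm Q (w - v))\<^sup>2 \<le> (qnorm Q (w' - v))\<^sup>2))"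

definition sup_dist :: "'a set \<Rightarrow> ('a \<Rightarrow> 'b::real_normed_vector) \<Rightarrow> ('a \<Rightarrow> 'b) \<Rightarrow> ereal" where
  "sup_dist A F G = (SUP x\<in>A. ereal (norm (F x - G x)))"

end

theory Submission
  imports Defs
begin

text \<open>For symmetric positive definite \<open>Q\<close> there are constants \<open>a, K > 0\<close> with
  \<open>a \<parallel>x\<parallel>\<^sup>2 \<le> x\<^sup>T Q x\<close> and \<open>\<parallel>Q x\<parallel> \<le> K \<parallel>x\<parallel>\<close>. Combining the variational inequalities
  characterising the \<open>Q\<close>-nearest points \<open>p\<^sub>1, p\<^sub>2\<close> of \<open>v\<^sub>1, v\<^sub>2\<close> in a convex set gives
  \<open>(p\<^sub>1 - p\<^sub>2)\<^sup>T Q (p\<^sub>1 - p\<^sub>2) \<le> (v\<^sub>1 - v\<^sub>2)\<^sup>T Q (p\<^sub>1 - p\<^sub>2)\<close>, so the projection is Lipschitz with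
  constant \<open>K / a\<close> in the Euclidean norm. Since it fixes the feasible set, which is closed,
  \<open>\<parallel>u(\<phi>) - \<Pi>(f\<^sub>\<theta>(\<phi>))\<parallel> = \<parallel>\<Pi>(u(\<phi>)) - \<Pi>(f\<^sub>\<theta>(\<phi>))\<parallel> \<le> (K / a) \<parallel>u(\<phi>) - f\<^sub>\<theta>(\<phi>)\<parallel>\<close>, and it suffices
  to approximate \<open>u\<close> by a network uniformly within \<open>\<epsilon> a / (2 K)\<close>.\<close>

definition Q_nearest :: "real^'n^'n \<Rightarrow> (real^'n) set \<Rightarrow> real^'n \<Rightarrow> real^'n \<Rightarrow> bool" where
  "Q_nearest Q C v p \<longleftrightarrow>
     p \<in> C \<and> (\<forall>w\<in>C. (p - v) \<bullet> (Q *v (p - v)) \<le> (w - v) \<bullet> (Q *v (w - v)))"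

lemma inner_matrix_vector_commute:
  fixes Q :: "real^'n^'n"
  assumes "transpose Q = Q"
  shows "x \<bullet> (Q *v y) = y \<bullet> (Q *v x)"
proof -
  have "x \<bullet> (Q *v y) = (transpose Q *v x) \<bullet> y" by (simp add: dot_lmul_matrix)
  then show ?thesis using assms by (simp add: inner_commute)
qed

lemma pos_def_quadratic_form_ge:
  fixes Q :: "real^'n^'n"
  assumes pos_def: "\<forall>x. x \<noteq> 0 \<longrightarrow> x \<bullet> (Q *v x) > 0"
  obtains a where "a > 0" "\<And>x. a * (norm x)\<^sup>2 \<le> x \<bullet> (Q *v x)"
proof -
  have "continuous_on (sphere 0 1) (\<lambda>x::real^'n. x \<bullet> (Q *v x))"
    by (intro continuous_intros bounded_linear.continuous_on[OF matrix_vector_mul_bounded_linear])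
  moreover have "sphere (0::real^'n) 1 \<noteq> {}" by simp
  ultimately obtain x0 where x0: "x0 \<in> sphere 0 1"
    and min: "\<And>y. y \<in> sphere 0 1 \<Longrightarrow> x0 \<bullet> (Q *v x0) \<le> y \<bullet> (Q *v y)"
    using continuous_attains_inf[OF compact_sphere] by blast
  define a where "a = x0 \<bullet> (Q *v x0)"
  have "x0 \<noteq> 0" using x0 by auto
  then have "a > 0" using pos_def unfolding a_def by blast
  moreover have "a * (norm x)\<^sup>2 \<le> x \<bullet> (Q *v x)" for x
  proof (cases "x = 0")
    case False
    have "(1 / norm x) *\<^sub>R x \<in> sphere 0 1" using False by simp
    then have "a \<le> (1 / norm x)\<^sup>2 * (x \<bullet> (Q *v x))"
      using min unfolding a_def by (fastforce simp: matrix_vector_mult_scaleR power2_eq_square)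
    then show ?thesis using False by (simp add: field_simps)
  qed simp
  ultimately show thesis using that by blast
qed

lemma Q_nearest_variational_inequality:
  fixes Q :: "real^'n^'n"
  assumes sym: "transpose Q = Q" and psd: "\<And>x. 0 \<le> x \<bullet> (Q *v x)"
    and "convex C" and p: "Q_nearest Q C v p" and "c \<in> C"
  shows "0 \<le> (p - v) \<bullet> (Q *v (c - p))"
proof (rule ccontr)
  define d where "d = (p - v) \<bullet> (Q *v (c - p))"
  define e where "e = (c - p) \<bullet> (Q *v (c - p))"
  assume "\<not> ?thesis"
  then have "d < 0" unfolding d_def by simp
  have "e \<ge> 0" using psd unfolding e_def by blast
  text \<open>A small step from \<open>p\<close> towards \<open>c\<close> changes the objective by \<open>2 t d + t\<^sup>2 e < 0\<close>.\<close>
  define t where "t = min 1 (- d / (e + 1))"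
  have t: "0 < t" "t \<le> 1" using \<open>d < 0\<close> \<open>e \<ge> 0\<close> unfolding t_def by (auto simp: divide_neg_pos)
  have "t * e \<le> - d / (e + 1) * e" using \<open>e \<ge> 0\<close> unfolding t_def by (intro mult_right_mono) auto
  also have "\<dots> \<le> - d" using \<open>e \<ge> 0\<close> \<open>d < 0\<close> by (simp add: field_simps)
  finally have "2 * d + t * e < 0" using \<open>d < 0\<close> by linarith
  have "(1 - t) *\<^sub>R p + t *\<^sub>R c \<in> C"
    using \<open>convex C\<close> \<open>c \<in> C\<close> p t unfolding Q_nearest_def by (intro convexD) auto
  moreover have "(1 - t) *\<^sub>R p + t *\<^sub>R c - v = (p - v) + t *\<^sub>R (c - p)" by (simp add: algebra_simps)
  ultimately have "(p - v) \<bullet> (Q *v (p - v))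
      \<le> ((p - v) + t *\<^sub>R (c - p)) \<bullet> (Q *v ((p - v) + t *\<^sub>R (c - p)))"
    using p unfolding Q_nearest_def by metis
  also have "\<dots> = (p - v) \<bullet> (Q *v (p - v)) + t * d + t * ((c - p) \<bullet> (Q *v (p - v))) + t * t * e"
    unfolding d_def e_def
    by (simp add: matrix_vector_right_distrib matrix_vector_mult_scaleR
        inner_add_left inner_add_right algebra_simps)
  also have "\<dots> = (p - v) \<bullet> (Q *v (p - v)) + t * (2 * d + t * e)"
    unfolding inner_matrix_vector_commute[OF sym, of "c - p"] d_def[symmetric]
    by (simp add: algebra_simps)
  finally have "0 \<le> t * (2 * d + t * e)" by simp
  then show False using t \<open>2 * d + t * e < 0\<close> by (simp add: zero_le_mult_iff)
qed

lemma Q_nearest_lipschitz: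
  fixes Q :: "real^'n^'n"
  assumes sym: "transpose Q = Q" and "convex C"
    and a: "0 < a" "\<And>x. a * (norm x)\<^sup>2 \<le> x \<bullet> (Q *v x)"
    and K: "\<And>x. norm (Q *v x) \<le> K * norm x"
    and p1: "Q_nearest Q C v1 p1" and p2: "Q_nearest Q C v2 p2"
  shows "norm (p1 - p2) \<le> K / a * norm (v1 - v2)"
proof -
  define d where "d = p1 - p2"
  define w where "w = v1 - v2"
  have psd: "0 \<le> x \<bullet> (Q *v x)" for x by (rule order_trans[OF _ a(2)]) (use a(1) in simp)
  have "p1 \<in> C" "p2 \<in> C" using p1 p2 by (simp_all add: Q_nearest_def)
  then have "0 \<le> (p1 - v1) \<bullet> (Q *v (p2 - p1))" "0 \<le> (p2 - v2) \<bullet> (Q *v (p1 - p2))"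
    by (auto intro: Q_nearest_variational_inequality[OF sym psd \<open>convex C\<close> p1]
        Q_nearest_variational_inequality[OF sym psd \<open>convex C\<close> p2])
  then have "(d - w) \<bullet> (Q *v d) \<le> 0"
    unfolding d_def w_def
    by (simp add: matrix_vector_mult_diff_distrib inner_diff_left inner_diff_right algebra_simps)
  then have "d \<bullet> (Q *v d) \<le> w \<bullet> (Q *v d)" by (simp add: inner_diff_left)
  also have "\<dots> \<le> norm w * norm (Q *v d)" by (rule norm_cauchy_schwarz)
  also have "\<dots> \<le> norm w * (K * norm d)" using K by (simp add: mult_left_mono)
  finally have "a * norm d * norm d \<le> (K * norm w) * norm d"
    using a(2)[of d] by (simp add: power2_eq_square algebra_simps)
  moreover have "0 \<le> K * norm w" using K[of w] norm_ge_zero order_trans by blast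
  ultimately have "a * norm d \<le> K * norm w"
    by (cases "d = 0") (auto simp: mult_le_cancel_right)
  then show ?thesis using a(1) unfolding d_def w_def by (simp add: field_simps)
qed

lemma Q_nearest_exists:
  fixes Q :: "real^'n^'n"
  assumes a: "0 < a" "\<And>x. a * (norm x)\<^sup>2 \<le> x \<bullet> (Q *v x)"
    and "closed C" "C \<noteq> {}"
  obtains p where "Q_nearest Q C v p"
proof -
  define F where "F = (\<lambda>w::real^'n. (w - v) \<bullet> (Q *v (w - v)))"
  have contF: "continuous_on UNIV F" unfolding F_def
    by (intro continuous_intros bounded_linear.continuous_on[OF matrix_vector_mul_bounded_linear])
  obtain w0 where "w0 \<in> C" using assms by blast
  text \<open>Restrict to a sublevel set, which is compact by coercivity.\<close>
  define S where "S = C \<inter> {w. F w \<le> F w0}"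
  have "S \<subseteq> cball v (sqrt (F w0 / a))"
  proof
    fix w assume "w \<in> S"
    then have "a * (norm (w - v))\<^sup>2 \<le> F w0"
      using a(2) unfolding S_def F_def by (meson IntD2 mem_Collect_eq order_trans)
    then have "(norm (w - v))\<^sup>2 \<le> F w0 / a" using a(1) by (simp add: field_simps)
    then show "w \<in> cball v (sqrt (F w0 / a))" by (simp add: dist_norm norm_minus_commute real_le_rsqrt)
  qed
  moreover have "closed S" unfolding S_def
    using \<open>closed C\<close> contF by (intro closed_Int closed_Collect_le) auto
  ultimately have "compact S" by (metis bounded_cball bounded_subset compact_eq_bounded_closed)
  moreover have "S \<noteq> {}" using \<open>w0 \<in> C\<close> unfolding S_def by auto
  ultimately obtain p where "p \<in> S" "\<And>y. y \<in> S \<Longrightarrow> F p \<le> F y"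
    using continuous_attains_inf continuous_on_subset[OF contF] by (metis subset_UNIV)
  then have "Q_nearest Q C v p" unfolding Q_nearest_def S_def F_def by force
  then show thesis using that by blast
qed

lemma Q_nearest_projQ:
  fixes Q :: "real^'n^'n"
  assumes "0 < a" "\<And>x. a * (norm x)\<^sup>2 \<le> x \<bullet> (Q *v x)"
    and "closed C" "C \<noteq> {}"
  shows "Q_nearest Q C v (projQ Q C v)"
proof -
  have "(qnorm Q x)\<^sup>2 = x \<bullet> (Q *v x)" for x
    using order_trans[OF _ assms(2)[of x]] assms(1) unfolding qnorm_def by simp
  then have "projQ Q C v = (SOME p. Q_nearest Q C v p)"
    unfolding projQ_def Q_nearest_def by simp
  then show ?thesis using Q_nearest_exists[OF assms] by (metis someI)
qed

lemma norm_diff_projQ_le: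
  fixes Q :: "real^'n^'n"
  assumes sym: "transpose Q = Q" and pos_def: "\<forall>x. x \<noteq> 0 \<longrightarrow> x \<bullet> (Q *v x) > 0"
    and "closed C" "convex C"
  obtains L where "0 < L" "\<And>c v. c \<in> C \<Longrightarrow> norm (c - projQ Q C v) \<le> L * norm (c - v)"
proof -
  obtain a where a: "0 < a" "\<And>x. a * (norm x)\<^sup>2 \<le> x \<bullet> (Q *v x)"
    using pos_def_quadratic_form_ge[OF pos_def] by blast
  obtain K where K: "0 < K" "\<And>x. norm (Q *v x) \<le> norm x * K"
    using bounded_linear.pos_bounded[OF matrix_vector_mul_bounded_linear] by blast
  have "norm (c - projQ Q C v) \<le> K / a * norm (c - v)" if "c \<in> C" for c v
  proof (rule Q_nearest_lipschitz[OF sym \<open>convex C\<close> a])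
    show "norm (Q *v x) \<le> K * norm x" for x using K(2) by (simp add: mult.commute)
    show "Q_nearest Q C c c"
      using \<open>c \<in> C\<close> order_trans[OF _ a(2)] a(1) unfolding Q_nearest_def by simp
    show "Q_nearest Q C v (projQ Q C v)"
      using Q_nearest_projQ[OF a \<open>closed C\<close>] \<open>c \<in> C\<close> by blast
  qed
  moreover have "0 < K / a" using a(1) K(1) by simp
  ultimately show thesis using that by blast
qed

lemma closed_feasible:
  assumes "continuous_on UNIV g" "continuous_on UNIV h"
  shows "closed (feasible g h)"
  unfolding feasible_def
  by (intro closed_Collect_conj closed_Collect_all closed_Collect_le closed_Collect_eq
      continuous_intros assms)

lemma sup_dist_le_scaled:
  assumes "0 \<le> L" "\<And>x. x \<in> A \<Longrightarrow> norm (F x - H x) \<le> L * norm (F x - G x)"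
    and "sup_dist A F G < ereal \<delta>"
  shows "sup_dist A F H \<le> ereal (L * \<delta>)"
  unfolding sup_dist_def
proof (rule SUP_least)
  fix x assume "x \<in> A"
  then have "ereal (norm (F x - G x)) < ereal \<delta>"
    using assms(3) unfolding sup_dist_def by (meson SUP_upper le_less_trans)
  then show "ereal (norm (F x - H x)) \<le> ereal (L * \<delta>)"
    using assms(1) assms(2)[OF \<open>x \<in> A\<close>] by (simp add: mult_left_mono order_trans)
qed

theorem theorem2:
  fixes \<Phi> :: "(real^'m) set"
    and Q :: "real^'n^'n"
    and g :: "real^'n \<Rightarrow> real^'s"
    and h :: "real^'n \<Rightarrow> real^'q"
    and f :: "'theta \<Rightarrow> real^'m \<Rightarrow> real^'n"
  assumes "compact \<Phi>"
    and "transpose Q = Q"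
    and "\<forall>x. x \<noteq> 0 \<longrightarrow> x \<bullet> (Q *v x) > 0"
    and "continuous_on UNIV g" and "continuous_on UNIV h"
    and "convex (feasible g h)"
    and "\<forall>u :: real^'m \<Rightarrow> real^'n. continuous_on \<Phi> u \<longrightarrow>
           (\<forall>\<epsilon>>0. \<exists>\<theta>. sup_dist \<Phi> u (f \<theta>) < ereal \<epsilon>)"
  shows "\<forall>u :: real^'m \<Rightarrow> real^'n. continuous_on \<Phi> u \<and> u ` \<Phi> \<subseteq> feasible g h \<longrightarrow>
           (\<forall>\<epsilon>>0. \<exists>\<theta>. sup_dist \<Phi> u (\<lambda>\<phi>. projQ Q (feasible g h) (f \<theta> \<phi>)) < ereal \<epsilon>)"
proof (intro allI impI)
  fix u :: "real^'m \<Rightarrow> real^'n" and \<epsilon> :: real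
  assume u: "continuous_on \<Phi> u \<and> u ` \<Phi> \<subseteq> feasible g h" and "\<epsilon> > 0"
  obtain L where L: "0 < L"
    "\<And>c v. c \<in> feasible g h \<Longrightarrow> norm (c - projQ Q (feasible g h) v) \<le> L * norm (c - v)"
    using norm_diff_projQ_le[OF assms(2,3) closed_feasible[OF assms(4,5)] assms(6)] by blast
  have "\<epsilon> / (2 * L) > 0" using \<open>\<epsilon> > 0\<close> \<open>0 < L\<close> by simp
  then obtain \<theta> where "sup_dist \<Phi> u (f \<theta>) < ereal (\<epsilon> / (2 * L))"
    using assms(7) u by blast
  then have "sup_dist \<Phi> u (\<lambda>\<phi>. projQ Q (feasible g h) (f \<theta> \<phi>)) \<le> ereal (L * (\<epsilon> / (2 * L)))"
    using L u by (intro sup_dist_le_scaled) auto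
  also have "\<dots> < ereal \<epsilon>" using \<open>\<epsilon> > 0\<close> \<open>0 < L\<close> by simp
  finally show "\<exists>\<theta>. sup_dist \<Phi> u (\<lambda>\<phi>. projQ Q (feasible g h) (f \<theta> \<phi>)) < ereal \<epsilon>" by blast
qed

end
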